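(* Let $x,p\in\mathbb{R}^d$ with $\lVert x\rVert=1$ and $\lVert p\rVert>1$, and let $y=\frac{p+x}{\lVert p+x\rVert}$. Then $$\Big\lVert\frac{p}{\lVert p\rVert}-y\Big\rVert\le\sqrt{2-2\sqrt{1-\frac{1}{\lVert p\rVert^2}}}.$$
   Context: $\lVert\cdot\rVert$ denotes the Euclidean norm on $\mathbb{R}^d$. *)

theory Defs
  imports "HOL-Analysis.Analysis"
begin

end

theory Submission
  imports Defs
begin

text \<open>For unit vectors \<open>\<parallel>u - y\<parallel> = sqrt (2 - 2 u \<bullet> y)\<close>, so it suffices to bound the cosine of the
  angle between \<open>p\<close> and \<open>p + x\<close> from below by \<open>sqrt (1 - 1/\<parallel>p\<parallel>\<^sup>2)\<close>, the cosine of the angle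
  between \<open>p\<close> and a tangent from \<open>p\<close> to the unit sphere. With \<open>r = \<parallel>p\<parallel>\<close> and \<open>t = p \<bullet> x\<close> this
  follows from the identity \<open>(r\<^sup>2 + t)\<^sup>2 - \<parallel>p + x\<parallel>\<^sup>2 (r\<^sup>2 - 1) = (1 + t)\<^sup>2\<close>.\<close>

lemma norm_diff_unit_eq_sqrt_inner:
  fixes a b :: "'a::real_inner"
  assumes "norm a = 1" and "norm b = 1"
  shows "norm (a - b) = sqrt (2 - 2 * (a \<bullet> b))"
proof -
  have "a \<bullet> a = 1" and "b \<bullet> b = 1"
    using assms by (simp_all add: dot_square_norm)
  then have "(norm (a - b))\<^sup>2 = 2 - 2 * (a \<bullet> b)"
    unfolding power2_norm_eq_inner by (simp add: inner_diff_left inner_diff_right inner_commute)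
  then show ?thesis
    by (metis norm_ge_zero real_sqrt_unique)
qed

lemma inner_normalize_normalize:
  fixes a b :: "'a::real_inner"
  shows "(a /\<^sub>R norm a) \<bullet> (b /\<^sub>R norm b) = (a \<bullet> b) / (norm a * norm b)"
  by (simp add: divide_inverse mult_ac)

lemma norm_add_unit_mult_sqrt_le_inner:
  fixes p x :: "'a::real_inner"
  assumes "norm x = 1" and "norm p \<ge> 1"
  shows "norm (p + x) * sqrt ((norm p)\<^sup>2 - 1) \<le> p \<bullet> (p + x)"
proof -
  define r where "r = norm p"
  define t where "t = p \<bullet> x"
  have "\<bar>t\<bar> \<le> r"
    using Cauchy_Schwarz_ineq2[of p x] assms by (simp add: t_def r_def)
  moreover have "r \<le> r\<^sup>2"
    using assms power_increasing[of 1 2 r] by (simp add: r_def)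
  ultimately have inner_nonneg: "0 \<le> r\<^sup>2 + t"
    by linarith
  have inner_eq: "p \<bullet> (p + x) = r\<^sup>2 + t"
    by (simp add: inner_add_right t_def r_def dot_square_norm)
  have "p \<bullet> p = r\<^sup>2" and "x \<bullet> x = 1"
    using assms by (simp_all add: r_def dot_square_norm)
  then have norm_sum_sq: "(norm (p + x))\<^sup>2 = r\<^sup>2 + 2 * t + 1"
    unfolding power2_norm_eq_inner by (simp add: inner_add_left inner_add_right inner_commute t_def)
  have "(norm (p + x) * sqrt (r\<^sup>2 - 1))\<^sup>2 = (norm (p + x))\<^sup>2 * (r\<^sup>2 - 1)"
    using assms by (simp add: power_mult_distrib r_def)
  also have "\<dots> = (r\<^sup>2 + t)\<^sup>2 - (1 + t)\<^sup>2"
    unfolding norm_sum_sq by (simp add: algebra_simps power2_eq_square)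
  also have "\<dots> \<le> (r\<^sup>2 + t)\<^sup>2"
    by simp
  finally have "norm (p + x) * sqrt (r\<^sup>2 - 1) \<le> r\<^sup>2 + t"
    using inner_nonneg by (rule power2_le_imp_le)
  then show ?thesis
    using inner_eq by (simp add: r_def)
qed

theorem lemma3:
  fixes x p :: "real ^ 'n"
  assumes "norm x = 1" and "norm p > 1"
  shows "norm (p /\<^sub>R norm p - (p + x) /\<^sub>R norm (p + x))
           \<le> sqrt (2 - 2 * sqrt (1 - 1 / (norm p)\<^sup>2))"
proof -
  define r where "r = norm p"
  define s where "s = norm (p + x)"
  have "s \<ge> r - 1"
    using norm_triangle_ineq2[of p "-x"] assms by (simp add: s_def r_def)
  with assms have "s > 0" and "r > 1"
    by (simp_all add: r_def)
  then have "p \<noteq> 0" and "p + x \<noteq> 0"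
    by (auto simp: r_def s_def)
  have "sqrt (1 - 1 / r\<^sup>2) = sqrt (r\<^sup>2 - 1) / r"
    using \<open>r > 1\<close> by (simp add: field_simps real_sqrt_divide)
  also have "\<dots> = s * sqrt (r\<^sup>2 - 1) / (r * s)"
    using \<open>s > 0\<close> by simp
  also have "\<dots> \<le> (p \<bullet> (p + x)) / (r * s)"
    using norm_add_unit_mult_sqrt_le_inner[of x p] assms \<open>s > 0\<close> \<open>r > 1\<close>
    by (intro divide_right_mono) (simp_all add: r_def s_def)
  also have "\<dots> = (p /\<^sub>R r) \<bullet> ((p + x) /\<^sub>R s)"
    unfolding r_def s_def by (rule inner_normalize_normalize[symmetric])
  finally have cos_bound: "sqrt (1 - 1 / r\<^sup>2) \<le> (p /\<^sub>R r) \<bullet> ((p + x) /\<^sub>R s)" .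
  have "norm (p /\<^sub>R r - (p + x) /\<^sub>R s) = sqrt (2 - 2 * ((p /\<^sub>R r) \<bullet> ((p + x) /\<^sub>R s)))"
    using \<open>p \<noteq> 0\<close> \<open>p + x \<noteq> 0\<close>
    by (intro norm_diff_unit_eq_sqrt_inner) (simp_all add: r_def s_def)
  also have "\<dots> \<le> sqrt (2 - 2 * sqrt (1 - 1 / r\<^sup>2))"
    using cos_bound by simp
  finally show ?thesis
    by (simp add: r_def s_def)
qed

end
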